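(* Let $\Phi$ be a strict Young function, $A\in GL(d,\mathbf R)$ and $a\in S^0_{1,0}(\mathbf R^{2d})$. Then $\mathrm{Op}_A(a)$ is continuous $L^\Phi(\mathbf R^d)\to L^\Phi(\mathbf R^d)$ and $wL^\Phi(\mathbf R^d)\to wL^\Phi(\mathbf R^d)$.
   Context: A Young function is a map $\Phi:[0,\infty)\to[0,\infty]$ which is convex, satisfies $\Phi(0)=0$ and $\lim_{t\to\infty}\Phi(t)=+\infty$. $\Phi$ satisfies the $\Delta_2$-condition if there is $C\ge1$ with $\Phi(2t)\le C\Phi(t)$ for all $t\ge0$; it satisfies the $\Lambda$-condition if there is $p>1$ with $\Phi(ct)\le c^p\Phi(t)$ for all $t\ge0$, $c\in(0,1]$. A Young function is strict if it is finite-valued on $[0,\infty)$ and satisfies both the $\Delta_2$- and the $\Lambda$-condition. $L^\Phi(\mathbf R^d)$ is the set of measurable $f$ with $\|f\|_{L^\Phi}=\inf\{\lambda>0:\int\Phi(|f|/\lambda)\,dx\le1\}<\infty$; with $\mu_f(t)=|\{x:|f(x)|>t\}|$, $wL^\Phi(\mathbf R^d)$ is the set of measurable $f$ with $\|f\|_{wL^\Phi}=\inf\{\lambda>0:\sup_{t>0}\Phi(t/\lambda)\mu_f(t)\le1\}<\infty$. $S^0_{1,0}(\mathbf R^{2d})$ is the set of $a\in C^\infty(\mathbf R^{2d})$ with $\sup_{x,\xi}\langle\xi\rangle^{|\alpha|}|D_\xi^\alpha D_x^\beta a(x,\xi)|<\infty$ for all multi-indices $\alpha,\beta$, where $\langle\xi\rangle=(1+|\xi|^2)^{1/2}$.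 For $f\in\mathscr S(\mathbf R^d)$, $\mathrm{Op}_A(a)f(x)=(2\pi)^{-d}\iint a(x-A(x-y),\xi)f(y)e^{i\langle x-y,\xi\rangle}\,dy\,d\xi$. This operator extends uniquely to a bounded operator on every $L^p$, $1<p<\infty$, hence to $L^{p_0}+L^{p_1}$ for $1<p_0<p_1<\infty$; the claim concerns this extension ($L^\Phi$ and $wL^\Phi$ lie in such sums for suitable $p_0,p_1$), and continuity means $\|\mathrm{Op}_A(a)f\|_{L^\Phi}\lesssim\|f\|_{L^\Phi}$ and $\|\mathrm{Op}_A(a)f\|_{wL^\Phi}\lesssim\|f\|_{wL^\Phi}$. *)

theory Defs
  imports "HOL-Analysis.Analysis"
begin

definition young_fun :: "(real \<Rightarrow> ennreal) \<Rightarrow> bool" where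
  "young_fun \<Phi> \<longleftrightarrow> \<Phi> 0 = 0 \<and>
     (\<forall>s\<ge>0. \<forall>t\<ge>0. \<forall>l\<in>{0..1}.
        \<Phi> ((1 - l) * s + l * t) \<le> ennreal (1 - l) * \<Phi> s + ennreal l * \<Phi> t) \<and>
     (\<Phi> \<longlongrightarrow> \<infinity>) at_top"

definition delta2_cond :: "(real \<Rightarrow> ennreal) \<Rightarrow> bool" where
  "delta2_cond \<Phi> \<longleftrightarrow> (\<exists>C\<ge>1. \<forall>t\<ge>0. \<Phi> (2 * t) \<le> ennreal C * \<Phi> t)"

definition lambda_cond :: "(real \<Rightarrow> ennreal) \<Rightarrow> bool" where
  "lambda_cond \<Phi> \<longleftrightarrow> (\<exists>p>1. \<forall>t\<ge>0. \<forall>c. 0 < c \<and> c \<le> 1 \<longrightarrow>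
      \<Phi> (c * t) \<le> ennreal (c powr p) * \<Phi> t)"

definition strict_young :: "(real \<Rightarrow> ennreal) \<Rightarrow> bool" where
  "strict_young \<Phi> \<longleftrightarrow> young_fun \<Phi> \<and> (\<forall>t\<ge>0. \<Phi> t < \<infinity>) \<and>
     delta2_cond \<Phi> \<and> lambda_cond \<Phi>"

definition orlicz_norm :: "(real \<Rightarrow> ennreal) \<Rightarrow> (real^'n \<Rightarrow> complex) \<Rightarrow> ennreal" where
  "orlicz_norm \<Phi> f = Inf {ennreal l | l. l > 0 \<and>
      (\<integral>\<^sup>+ x. \<Phi> (cmod (f x) / l) \<partial>lebesgue) \<le> 1}"

definition orlicz_space :: "(real \<Rightarrow> ennreal) \<Rightarrow> (real^'n \<Rightarrow> complex) set" where
  "orlicz_space \<Phi> = {f. f \<in> borel_measurable lebesgue \<and> orlicz_norm \<Phi> f < \<infinity>}"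

definition distrib_fun :: "(real^'n \<Rightarrow> complex) \<Rightarrow> real \<Rightarrow> ennreal" where
  "distrib_fun f t = emeasure lebesgue {x. cmod (f x) > t}"

definition weak_orlicz_norm :: "(real \<Rightarrow> ennreal) \<Rightarrow> (real^'n \<Rightarrow> complex) \<Rightarrow> ennreal" where
  "weak_orlicz_norm \<Phi> f = Inf {ennreal l | l. l > 0 \<and>
      (\<forall>t>0. \<Phi> (t / l) * distrib_fun f t \<le> 1)}"

definition weak_orlicz_space :: "(real \<Rightarrow> ennreal) \<Rightarrow> (real^'n \<Rightarrow> complex) set" where
  "weak_orlicz_space \<Phi> = {f. f \<in> borel_measurable lebesgue \<and> weak_orlicz_norm \<Phi> f < \<infinity>}"

definition pd :: "'a::euclidean_space \<Rightarrow> ('a \<Rightarrow> complex) \<Rightarrow> 'a \<Rightarrow> complex" where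
  "pd b g x = vector_derivative (\<lambda>t. g (x + t *\<^sub>R b)) (at 0)"

fun iter_pd :: "'a::euclidean_space list \<Rightarrow> ('a \<Rightarrow> complex) \<Rightarrow> 'a \<Rightarrow> complex" where
  "iter_pd [] g = g"
| "iter_pd (b # bs) g = pd b (iter_pd bs g)"

definition smooth_fun :: "('a::euclidean_space \<Rightarrow> complex) \<Rightarrow> bool" where
  "smooth_fun g \<longleftrightarrow> (\<forall>bs. set bs \<subseteq> Basis \<longrightarrow>
      continuous_on UNIV (iter_pd bs g) \<and>
      (\<forall>b\<in>Basis. \<forall>x. (\<lambda>t. iter_pd bs g (x + t *\<^sub>R b)) differentiable (at 0)))"

definition schwartz :: "(real^'n \<Rightarrow> complex) \<Rightarrow> bool" where
  "schwartz f \<longleftrightarrow> smooth_fun f \<and>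
     (\<forall>bs. set bs \<subseteq> Basis \<longrightarrow> (\<forall>N::nat. \<exists>C. \<forall>x. (1 + norm x) ^ N * cmod (iter_pd bs f x) \<le> C))"

text \<open>Symbols on R^{2d} = R^d x R^d (first component x, second xi). A basis direction
  of the product is a xi-direction iff its first component is 0; the length of the
  multi-index alpha equals the number of xi-directions in the list.\<close>
definition symbol_S0 :: "((real^'n) \<times> (real^'n) \<Rightarrow> complex) set" where
  "symbol_S0 = {a. smooth_fun a \<and>
     (\<forall>bs. set bs \<subseteq> Basis \<longrightarrow> (\<exists>C. \<forall>x \<xi>.
        (1 + (norm \<xi>)\<^sup>2) powr (real (length (filter (\<lambda>b. fst b = 0) bs)) / 2)
          * cmod (iter_pd bs a (x, \<xi>)) \<le> C))}"

definition op_A :: "real^'n^'n \<Rightarrow> ((real^'n) \<times> (real^'n) \<Rightarrow> complex) \<Rightarrow>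
    (real^'n \<Rightarrow> complex) \<Rightarrow> real^'n \<Rightarrow> complex" where
  "op_A A a f x = complex_of_real ((2 * pi) powr (- real CARD('n))) *
     (\<integral>\<xi>. (\<integral>y. a (x - A *v (x - y), \<xi>) * f y * cis ((x - y) \<bullet> \<xi>) \<partial>lborel) \<partial>lborel)"

definition in_Lp :: "real \<Rightarrow> (real^'n \<Rightarrow> complex) \<Rightarrow> bool" where
  "in_Lp p f \<longleftrightarrow> f \<in> borel_measurable lebesgue \<and> integrable lebesgue (\<lambda>x. cmod (f x) powr p)"

text \<open>T is (a representative of) the unique extension of Op_A(a) from Schwartz functions
  to a bounded operator on every L^p, 1<p<\<infinity>, extended additively to sums L^p + L^q.\<close>
definition is_Op_extension :: "real^'n^'n \<Rightarrow> ((real^'n) \<times> (real^'n) \<Rightarrow> complex) \<Rightarrow>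
    ((real^'n \<Rightarrow> complex) \<Rightarrow> (real^'n \<Rightarrow> complex)) \<Rightarrow> bool" where
  "is_Op_extension A a T \<longleftrightarrow>
     (\<forall>f. schwartz f \<longrightarrow> (AE x in lebesgue. T f x = op_A A a f x)) \<and>
     (\<forall>p>1. \<exists>C. \<forall>f. in_Lp p f \<longrightarrow> in_Lp p (T f) \<and>
          (\<integral>x. cmod (T f x) powr p \<partial>lebesgue) \<le> C * (\<integral>x. cmod (f x) powr p \<partial>lebesgue)) \<and>
     (\<forall>p q f g. 1 < p \<longrightarrow> 1 < q \<longrightarrow> in_Lp p f \<longrightarrow> in_Lp q g \<longrightarrow>
          (AE x in lebesgue. T (\<lambda>y. f y + g y) x = T f x + T g x))"

end

theory Submission
  imports Defs
begin

text \<open>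
  The Lambda-condition with exponent p makes \<open>\<Phi>\<close> grow at least like t^p, the
  Delta2-condition with constant D at most like t^(log2 D).  Fix exponents 1 < q0 < p and
  q1 > max 1 (log2 D); by hypothesis T is bounded on L^q0 and on L^q1 and additive on
  L^q0 + L^q1, so a Marcinkiewicz-type argument applies.

  For the Orlicz norm, split f at every dyadic height 2^k l into its part above the height
  (in L^q0) and below it (in L^q1).  Pointwise, \<open>\<Phi>\<close>(|Tf|/4l) is dominated by the sum
  over k of \<open>\<Phi>\<close>(2^k) times the normalised q0- and q1-powers of T applied to the two parts.
  After the L^q bounds, the corresponding sums for f itself are geometric series in k, with
  ratios 2^(q0-p) and D 2^(-q1), and add up to a multiple of \<open>\<Phi>\<close>(|f|/l).

  For the weak norm, split f once at height s.  The bound \<open>\<mu>\<close>_f(t) <= 1/\<open>\<Phi>\<close>(t/l)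
  turns the q0-norm of the upper part and the q1-norm of the lower part into geometric sums
  over dyadic layers, and Chebyshev's inequality for T of each part bounds \<open>\<mu>\<close>_Tf(2s) by a
  multiple of 1/\<open>\<Phi>\<close>(s/l).
\<close>

section \<open>Geometric and dyadic sums\<close>

lemma suminf_le_geometric:
  fixes h :: "nat \<Rightarrow> ennreal"
  assumes "\<And>i. h i \<le> ennreal (c * r ^ i)" "0 \<le> r" "r < 1" "c \<ge> 0"
  shows "(\<Sum>i. h i) \<le> ennreal (c / (1 - r))"
proof -
  have "(\<Sum>i. h i) \<le> (\<Sum>i. ennreal (c * r ^ i))"
    using assms(1) by (intro suminf_le) auto
  also have "\<dots> = ennreal (c * (1 / (1 - r)))"
    using assms by (intro suminf_ennreal_eq sums_mult geometric_sums) auto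
  finally show ?thesis by simp
qed

lemma nn_integral_int_le_geometric_up:
  fixes g :: "int \<Rightarrow> ennreal"
  assumes zero: "\<And>k. k < m \<Longrightarrow> g k = 0"
    and bound: "\<And>k. k \<ge> m \<Longrightarrow> g k \<le> ennreal (c * r ^ nat (k - m))"
    and "0 \<le> r" "r < 1" "c \<ge> 0"
  shows "(\<integral>\<^sup>+k. g k \<partial>count_space UNIV) \<le> ennreal (c / (1 - r))"
proof -
  have "(\<integral>\<^sup>+k. g k \<partial>count_space UNIV) = (\<integral>\<^sup>+k. g k \<partial>count_space {m..})"
    using zero by (intro nn_integral_count_space_eq) auto
  also have "\<dots> = (\<integral>\<^sup>+i. g (m + int i) \<partial>count_space UNIV)"
    by (intro nn_integral_bij_count_space[symmetric] bij_betwI[where g="\<lambda>k. nat (k - m)"]) auto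
  also have "\<dots> = (\<Sum>i. g (m + int i))" by (rule nn_integral_count_space_nat)
  also have "\<dots> \<le> ennreal (c / (1 - r))"
    using assms by (intro suminf_le_geometric) (auto intro: order_trans[OF bound])
  finally show ?thesis .
qed

lemma nn_integral_int_le_geometric_down:
  fixes g :: "int \<Rightarrow> ennreal"
  assumes zero: "\<And>k. k > m \<Longrightarrow> g k = 0"
    and bound: "\<And>k. k \<le> m \<Longrightarrow> g k \<le> ennreal (c * r ^ nat (m - k))"
    and "0 \<le> r" "r < 1" "c \<ge> 0"
  shows "(\<integral>\<^sup>+k. g k \<partial>count_space UNIV) \<le> ennreal (c / (1 - r))"
proof -
  have "(\<integral>\<^sup>+k. g k \<partial>count_space UNIV) = (\<integral>\<^sup>+k. g k \<partial>count_space {..m})"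
    using zero by (intro nn_integral_count_space_eq) auto
  also have "\<dots> = (\<integral>\<^sup>+i. g (m - int i) \<partial>count_space UNIV)"
    by (intro nn_integral_bij_count_space[symmetric] bij_betwI[where g="\<lambda>k. nat (m - k)"]) auto
  also have "\<dots> = (\<Sum>i. g (m - int i))" by (rule nn_integral_count_space_nat)
  also have "\<dots> \<le> ennreal (c / (1 - r))"
    using assms by (intro suminf_le_geometric) (auto intro: order_trans[OF bound])
  finally show ?thesis .
qed

definition dyadic :: "int \<Rightarrow> real" where
  "dyadic k = 2 powr (real_of_int k)"

lemma dyadic_pos [simp]: "dyadic k > 0"
  by (simp add: dyadic_def)

lemma dyadic_less_iff: "v > 0 \<Longrightarrow> dyadic k < v \<longleftrightarrow> k < \<lceil>log 2 v\<rceil>"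
  by (simp add: dyadic_def less_log_iff[symmetric] less_ceiling_iff)

lemma dyadic_add: "dyadic (k + j) = dyadic k * dyadic j"
  by (simp add: dyadic_def powr_add)

lemma dyadic_diff: "dyadic k / dyadic j = dyadic (k - j)"
  by (simp add: dyadic_def powr_diff)

lemma dyadic_of_nonneg: "k \<ge> 0 \<Longrightarrow> dyadic k = 2 ^ nat k"
  by (simp add: dyadic_def powr_realpow[symmetric])

lemma powr_of_int_nonneg: "x > 0 \<Longrightarrow> k \<ge> 0 \<Longrightarrow> x powr (real_of_int k) = x ^ nat k"
  by (simp add: powr_realpow[symmetric])

lemma dyadic_ratio_powr:
  assumes "m \<le> k"
  shows "(dyadic m / dyadic k) powr q = (2 powr (- q)) ^ nat (k - m)"
proof -
  have "(dyadic m / dyadic k) powr q = (2 powr (- q)) powr (real_of_int (k - m))"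
    by (simp only: dyadic_diff) (simp add: dyadic_def powr_powr algebra_simps)
  also have "\<dots> = (2 powr (- q)) ^ nat (k - m)"
    using assms by (intro powr_of_int_nonneg) auto
  finally show ?thesis .
qed

lemma dyadic_eq_power_mult: "m \<le> k \<Longrightarrow> dyadic k = 2 ^ nat (k - m) * dyadic m"
  using dyadic_add[of "k - m" m] dyadic_of_nonneg[of "k - m"] by simp

section \<open>Operators bounded on \<open>L\<^sup>q\<close>\<close>

text \<open>The constant C bounds q-th powers: it is the operator norm raised to the power q.\<close>

definition Lp_bounded ::
    "real \<Rightarrow> real \<Rightarrow> ((real^'n \<Rightarrow> complex) \<Rightarrow> (real^'n \<Rightarrow> complex)) \<Rightarrow> bool" where
  "Lp_bounded q C T \<longleftrightarrow> (\<forall>f. in_Lp q f \<longrightarrow> in_Lp q (T f) \<and>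
      (\<integral>x. cmod (T f x) powr q \<partial>lebesgue) \<le> C * (\<integral>x. cmod (f x) powr q \<partial>lebesgue))"

definition Lp_sum_additive ::
    "real \<Rightarrow> real \<Rightarrow> ((real^'n \<Rightarrow> complex) \<Rightarrow> (real^'n \<Rightarrow> complex)) \<Rightarrow> bool" where
  "Lp_sum_additive q0 q1 T \<longleftrightarrow> (\<forall>g h. in_Lp q0 g \<longrightarrow> in_Lp q1 h \<longrightarrow>
      (AE x in lebesgue. T (\<lambda>y. g y + h y) x = T g x + T h x))"

lemma Lp_bounded_nonneg_const:
  fixes T :: "(real^'n \<Rightarrow> complex) \<Rightarrow> (real^'n \<Rightarrow> complex)"
  assumes "Lp_bounded q C T"
  shows "Lp_bounded q (max C 0) T"
  unfolding Lp_bounded_def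
proof (intro allI impI conjI)
  fix f :: "real^'n \<Rightarrow> complex"
  assume f: "in_Lp q f"
  then show "in_Lp q (T f)" using assms by (simp add: Lp_bounded_def)
  have "C * (\<integral>x. cmod (f x) powr q \<partial>lebesgue) \<le> max C 0 * (\<integral>x. cmod (f x) powr q \<partial>lebesgue)"
    by (intro mult_right_mono) auto
  then show "(\<integral>x. cmod (T f x) powr q \<partial>lebesgue) \<le> max C 0 * (\<integral>x. cmod (f x) powr q \<partial>lebesgue)"
    using assms f by (auto simp: Lp_bounded_def)
qed

lemma Op_extension_Lp_bounded:
  assumes "is_Op_extension A a T" "q > 1"
  obtains C where "C \<ge> 0" "Lp_bounded q C T"
proof -
  obtain C where "Lp_bounded q C T"
    using assms unfolding is_Op_extension_def Lp_bounded_def by blast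
  then show thesis
    using that[of "max C 0"] Lp_bounded_nonneg_const by auto
qed

lemma Op_extension_Lp_sum_additive:
  assumes "is_Op_extension A a T" "q0 > 1" "q1 > 1"
  shows "Lp_sum_additive q0 q1 T"
  using assms by (simp add: is_Op_extension_def Lp_sum_additive_def)

lemma in_Lp_iff_nn_integral:
  "in_Lp q g \<longleftrightarrow> g \<in> borel_measurable lebesgue \<and>
     (\<integral>\<^sup>+x. ennreal (cmod (g x) powr q) \<partial>lebesgue) < \<infinity>"
  unfolding in_Lp_def by (rule conj_cong[OF refl]) (simp add: integrable_iff_bounded)

lemma nn_integral_powr_scaled:
  fixes h :: "real^'n \<Rightarrow> complex"
  assumes h: "h \<in> borel_measurable lebesgue" and c: "c \<ge> 0" and r: "r > 0"
  shows "(\<integral>\<^sup>+x. ennreal (c * (cmod (h x) / r) powr q) \<partial>lebesgue)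
       = ennreal (c * r powr (- q)) * (\<integral>\<^sup>+x. ennreal (cmod (h x) powr q) \<partial>lebesgue)"
proof -
  have "(\<integral>\<^sup>+x. ennreal (c * (cmod (h x) / r) powr q) \<partial>lebesgue)
      = (\<integral>\<^sup>+x. ennreal (c * r powr (- q)) * ennreal (cmod (h x) powr q) \<partial>lebesgue)"
    using c r by (intro nn_integral_cong)
      (simp add: powr_divide powr_minus ennreal_mult[symmetric] mult.assoc divide_inverse powr_mult inverse_powr)
  also have "\<dots> = ennreal (c * r powr (- q)) * (\<integral>\<^sup>+x. ennreal (cmod (h x) powr q) \<partial>lebesgue)"
    using h by (intro nn_integral_cmult) measurable
  finally show ?thesis .
qed

lemma in_Lp_if_scaled_nn_integral_finite:
  fixes g :: "real^'n \<Rightarrow> complex"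
  assumes g: "g \<in> borel_measurable lebesgue" and s: "s > 0"
    and finite: "(\<integral>\<^sup>+x. ennreal ((cmod (g x) / s) powr q) \<partial>lebesgue) < \<infinity>"
  shows "in_Lp q g"
  unfolding in_Lp_iff_nn_integral
proof (intro conjI g)
  have "ennreal (s powr (- q)) * (\<integral>\<^sup>+x. ennreal (cmod (g x) powr q) \<partial>lebesgue) < \<infinity>"
    using nn_integral_powr_scaled[OF g _ s, of 1 q] finite by simp
  then show "(\<integral>\<^sup>+x. ennreal (cmod (g x) powr q) \<partial>lebesgue) < \<infinity>"
    using s by (auto simp: ennreal_mult_less_top)
qed

lemma Lp_bounded_nn_integral_le:
  assumes T: "Lp_bounded q C T" and g: "in_Lp q g" and C: "C \<ge> 0"
    and c: "c \<ge> 0" and r: "r > 0"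
  shows "(\<integral>\<^sup>+x. ennreal (c * (cmod (T g x) / r) powr q) \<partial>lebesgue)
      \<le> ennreal C * (\<integral>\<^sup>+x. ennreal (c * (cmod (g x) / r) powr q) \<partial>lebesgue)"
proof -
  have Tg: "in_Lp q (T g)"
    and le: "(\<integral>x. cmod (T g x) powr q \<partial>lebesgue) \<le> C * (\<integral>x. cmod (g x) powr q \<partial>lebesgue)"
    using T g by (auto simp: Lp_bounded_def)
  have integral_eq: "(\<integral>\<^sup>+x. ennreal (cmod (h x) powr q) \<partial>lebesgue)
      = ennreal (\<integral>x. cmod (h x) powr q \<partial>lebesgue)" if "in_Lp q h" for h :: "real^'n \<Rightarrow> complex"
    using that by (intro nn_integral_eq_integral) (auto simp: in_Lp_def)
  have "(\<integral>\<^sup>+x. ennreal (c * (cmod (T g x) / r) powr q) \<partial>lebesgue)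
      = ennreal (c * r powr (- q)) * ennreal (\<integral>x. cmod (T g x) powr q \<partial>lebesgue)"
    using Tg c r by (simp add: nn_integral_powr_scaled integral_eq in_Lp_def)
  also have "\<dots> \<le> ennreal (c * r powr (- q)) * ennreal (C * (\<integral>x. cmod (g x) powr q \<partial>lebesgue))"
    by (intro mult_left_mono ennreal_leI le) auto
  also have "\<dots> = ennreal C * (ennreal (c * r powr (- q)) * ennreal (\<integral>x. cmod (g x) powr q \<partial>lebesgue))"
    using C by (simp add: ennreal_mult' mult_ac)
  also have "\<dots> = ennreal C * (\<integral>\<^sup>+x. ennreal (c * (cmod (g x) / r) powr q) \<partial>lebesgue)"
    using g c r by (simp add: nn_integral_powr_scaled integral_eq in_Lp_def)
  finally show ?thesis .
qed

lemma sets_lebesgue_norm_greater: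
  fixes g :: "real^'n \<Rightarrow> complex"
  assumes "g \<in> borel_measurable lebesgue"
  shows "{x. s < cmod (g x)} \<in> sets lebesgue"
proof -
  have "{x \<in> space lebesgue. s < cmod (g x)} \<in> sets lebesgue" using assms by measurable
  then show ?thesis by simp
qed

lemma emeasure_norm_greater_le_powr:
  fixes g :: "real^'n \<Rightarrow> complex"
  assumes g: "g \<in> borel_measurable lebesgue" and s: "s > 0" and q: "q > 0"
  shows "emeasure lebesgue {x. s < cmod (g x)}
    \<le> (\<integral>\<^sup>+x. ennreal (1 * (cmod (g x) / s) powr q) \<partial>lebesgue)"
proof -
  have "emeasure lebesgue {x. s < cmod (g x)} = (\<integral>\<^sup>+x. indicator {x. s < cmod (g x)} x \<partial>lebesgue)"
    using sets_lebesgue_norm_greater[OF g] by simp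
  also have "\<dots> \<le> (\<integral>\<^sup>+x. ennreal (1 * (cmod (g x) / s) powr q) \<partial>lebesgue)"
    using s q by (intro nn_integral_mono) (auto simp: indicator_def intro!: ge_one_powr_ge_zero)
  finally show ?thesis .
qed

lemma Lp_bounded_emeasure_greater_le:
  assumes T: "Lp_bounded q C T" and g: "in_Lp q g" and C: "C \<ge> 0" and s: "s > 0" and q: "q > 0"
  shows "emeasure lebesgue {x. s < cmod (T g x)}
    \<le> ennreal C * (\<integral>\<^sup>+x. ennreal ((cmod (g x) / s) powr q) \<partial>lebesgue)"
proof -
  have "T g \<in> borel_measurable lebesgue" using T g by (simp add: Lp_bounded_def in_Lp_def)
  then have "emeasure lebesgue {x. s < cmod (T g x)}
      \<le> (\<integral>\<^sup>+x. ennreal (1 * (cmod (T g x) / s) powr q) \<partial>lebesgue)"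
    using s q by (rule emeasure_norm_greater_le_powr)
  also have "\<dots> \<le> ennreal C * (\<integral>\<^sup>+x. ennreal (1 * (cmod (g x) / s) powr q) \<partial>lebesgue)"
    using s by (intro Lp_bounded_nn_integral_le[OF T g C]) auto
  finally show ?thesis by simp
qed

lemma nn_integral_le_geometric_layers:
  fixes h :: "real^'n \<Rightarrow> real" and a :: "nat \<Rightarrow> real"
  assumes dom: "\<And>x. ennreal (h x) \<le> (\<integral>\<^sup>+k. ennreal (a k) * indicator (A k) x \<partial>count_space UNIV)"
    and A: "\<And>k. A k \<in> sets lebesgue"
    and layer: "\<And>k. ennreal (a k) * emeasure lebesgue (A k) \<le> ennreal (c * r ^ k)"
    and "0 \<le> r" "r < 1" "c \<ge> 0"
  shows "(\<integral>\<^sup>+x. ennreal (h x) \<partial>lebesgue) \<le> ennreal (c / (1 - r))"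
proof -
  have "(\<integral>\<^sup>+x. ennreal (h x) \<partial>lebesgue)
      \<le> (\<integral>\<^sup>+x. \<integral>\<^sup>+k. ennreal (a k) * indicator (A k) x \<partial>count_space UNIV \<partial>lebesgue)"
    by (intro nn_integral_mono dom)
  also have "\<dots> = (\<integral>\<^sup>+k. \<integral>\<^sup>+x. ennreal (a k) * indicator (A k) x \<partial>lebesgue \<partial>count_space UNIV)"
    using A by (intro nn_integral_count_space_nn_integral) auto
  also have "\<dots> = (\<integral>\<^sup>+k. ennreal (a k) * emeasure lebesgue (A k) \<partial>count_space UNIV)"
    using A by (intro nn_integral_cong nn_integral_cmult_indicator) auto
  also have "\<dots> = (\<Sum>k. ennreal (a k) * emeasure lebesgue (A k))"
    by (rule nn_integral_count_space_nat)
  also have "\<dots> \<le> ennreal (c / (1 - r))"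
    using assms by (intro suminf_le_geometric) auto
  finally show ?thesis .
qed

lemma Inf_ennreal_scale_le:
  fixes P Q :: "real \<Rightarrow> bool"
  assumes PQ: "\<And>l. l > 0 \<Longrightarrow> P l \<Longrightarrow> Q (M * l)" and M: "M > 0"
  shows "Inf {ennreal l |l. l > 0 \<and> Q l} \<le> ennreal M * Inf {ennreal l |l. l > 0 \<and> P l}"
proof -
  define x where "x = Inf {ennreal l |l. l > 0 \<and> Q l}"
  have "x / ennreal M \<le> Inf {ennreal l |l. l > 0 \<and> P l}"
  proof (rule Inf_greatest)
    fix y assume "y \<in> {ennreal l |l. l > 0 \<and> P l}"
    then obtain l where l: "y = ennreal l" "l > 0" "P l" by auto
    have "x \<le> ennreal (M * l)" unfolding x_def using PQ[OF l(2,3)] M l(2)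
      by (intro Inf_lower) auto
    also have "\<dots> = ennreal M * ennreal l" using M l by (simp add: ennreal_mult)
    finally show "x / ennreal M \<le> y" using M l by (intro divide_le_posI_ennreal) auto
  qed
  then have "ennreal M * (x / ennreal M) \<le> ennreal M * Inf {ennreal l |l. l > 0 \<and> P l}"
    by (rule mult_left_mono) simp
  moreover have "ennreal M * (x / ennreal M) = x"
    using M by (simp add: ennreal_times_divide mult.commute[of "ennreal M"] ennreal_mult_divide_eq)
  ultimately show ?thesis by (simp add: x_def)
qed

section \<open>Truncation at a height\<close>

definition high_part :: "real \<Rightarrow> ('a \<Rightarrow> complex) \<Rightarrow> 'a \<Rightarrow> complex" where
  "high_part r f y = (if r < cmod (f y) then f y else 0)"

definition low_part :: "real \<Rightarrow> ('a \<Rightarrow> complex) \<Rightarrow> 'a \<Rightarrow> complex" where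
  "low_part r f y = (if r < cmod (f y) then 0 else f y)"

lemma high_part_plus_low_part: "(\<lambda>y. high_part r f y + low_part r f y) = f"
  by (auto simp: high_part_def low_part_def)

lemma measurable_high_part [measurable]:
  assumes "f \<in> borel_measurable M"
  shows "high_part r f \<in> borel_measurable M"
  using assms unfolding high_part_def by measurable

lemma measurable_low_part [measurable]:
  assumes "f \<in> borel_measurable M"
  shows "low_part r f \<in> borel_measurable M"
  using assms unfolding low_part_def by measurable

lemma high_part_powr_le_layers:
  assumes s: "s > 0" and q: "q > 0"
  shows "ennreal ((cmod (high_part s f x) / s) powr q)
      \<le> (\<integral>\<^sup>+k. ennreal (dyadic (int k + 1) powr q) * indicator {y. s * dyadic (int k) < cmod (f y)} x
          \<partial>count_space UNIV)"
proof (cases "s < cmod (f x)")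
  case False then show ?thesis using q by (simp add: high_part_def)
next
  case True
  define v where "v = cmod (f x) / s"
  have v: "v > 1" using True s by (simp add: v_def)
  define k where "k = nat (\<lceil>log 2 v\<rceil> - 1)"
  have "log 2 v > 0" using v by simp
  then have k: "int k = \<lceil>log 2 v\<rceil> - 1" by (simp add: k_def)
  have lt: "dyadic (int k) < v" using dyadic_less_iff[of v "int k"] v k by simp
  have le: "v \<le> dyadic (int k + 1)" using dyadic_less_iff[of v "int k + 1"] v k by simp
  have "ennreal ((cmod (high_part s f x) / s) powr q) \<le> ennreal (dyadic (int k + 1) powr q)"
    using True le v q by (intro ennreal_leI powr_mono2) (auto simp: high_part_def v_def)
  also have "\<dots> = ennreal (dyadic (int k + 1) powr q) * indicator {y. s * dyadic (int k) < cmod (f y)} x"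
    using lt s by (simp add: v_def field_simps indicator_def)
  also have "\<dots> \<le> (\<integral>\<^sup>+k. ennreal (dyadic (int k + 1) powr q) * indicator {y. s * dyadic (int k) < cmod (f y)} x
        \<partial>count_space UNIV)"
    by (rule nn_integral_ge_point) simp
  finally show ?thesis .
qed

lemma low_part_powr_le_layers:
  assumes s: "s > 0" and q: "q > 0"
  shows "ennreal ((cmod (low_part s f x) / s) powr q)
      \<le> (\<integral>\<^sup>+k. ennreal (dyadic (- int k) powr q) * indicator {y. s * dyadic (- int k - 1) < cmod (f y)} x
          \<partial>count_space UNIV)"
proof (cases "s < cmod (f x) \<or> f x = 0")
  case True then show ?thesis using q by (auto simp: low_part_def)
next
  case False
  define v where "v = cmod (f x) / s"
  have v: "v > 0" "v \<le> 1" using False s by (auto simp: v_def)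
  define k where "k = nat (- \<lceil>log 2 v\<rceil>)"
  have "log 2 v \<le> 0" using v by simp
  then have k: "- int k = \<lceil>log 2 v\<rceil>" by (simp add: k_def)
  have lt: "dyadic (- int k - 1) < v" using dyadic_less_iff[of v "- int k - 1"] v k by simp
  have le: "v \<le> dyadic (- int k)" using dyadic_less_iff[of v "- int k"] v k by simp
  have "ennreal ((cmod (low_part s f x) / s) powr q) \<le> ennreal (dyadic (- int k) powr q)"
    using False le v q by (intro ennreal_leI powr_mono2) (auto simp: low_part_def v_def)
  also have "\<dots> = ennreal (dyadic (- int k) powr q) * indicator {y. s * dyadic (- int k - 1) < cmod (f y)} x"
    using lt s by (simp add: v_def field_simps indicator_def)
  also have "\<dots> \<le> (\<integral>\<^sup>+k. ennreal (dyadic (- int k) powr q) * indicator {y. s * dyadic (- int k - 1) < cmod (f y)} x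
        \<partial>count_space UNIV)"
    by (rule nn_integral_ge_point) simp
  finally show ?thesis .
qed

lemma one_le_powr_add_powr:
  fixes a b r q0 q1 :: real
  assumes "r > 0" "q0 > 0" "q1 > 0" "r < a \<or> r < b"
  shows "1 \<le> (a / r) powr q0 + (b / r) powr q1"
proof -
  have powr_ge_1: "1 \<le> (c / r) powr q" if "r < c" "q > 0" for c q
    using that assms(1) by (intro ge_one_powr_ge_zero) auto
  show ?thesis
    using assms(4) powr_ge_1[OF _ assms(2), of a] powr_ge_1[OF _ assms(3), of b]
    by (auto intro: add_increasing add_increasing2)
qed

section \<open>Young functions with Lambda- and Delta2-growth\<close>

locale young_growth =
  fixes \<Phi> :: "real \<Rightarrow> ennreal" and p D :: real
  assumes p_gt_1: "p > 1" and D_ge_1: "D \<ge> 1"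
    and Phi_lambda: "\<And>t c. t \<ge> 0 \<Longrightarrow> 0 < c \<Longrightarrow> c \<le> 1 \<Longrightarrow> \<Phi> (c * t) \<le> ennreal (c powr p) * \<Phi> t"
    and Phi_delta2: "\<And>t. t \<ge> 0 \<Longrightarrow> \<Phi> (2 * t) \<le> ennreal D * \<Phi> t"
    and Phi_finite: "\<And>t. t \<ge> 0 \<Longrightarrow> \<Phi> t < \<infinity>"
    and Phi_0: "\<Phi> 0 = 0"
    and Phi_at_top: "(\<Phi> \<longlongrightarrow> \<infinity>) at_top"
begin

definition \<phi> :: "real \<Rightarrow> real" where
  "\<phi> t = enn2real (\<Phi> t)"

lemma phi_nonneg: "\<phi> t \<ge> 0"
  by (simp add: \<phi>_def)

lemma Phi_eq_phi: "t \<ge> 0 \<Longrightarrow> \<Phi> t = ennreal (\<phi> t)"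
  using Phi_finite[of t] by (simp add: \<phi>_def ennreal_enn2real_if)

lemma phi_0: "\<phi> 0 = 0"
  by (simp add: \<phi>_def Phi_0)

lemma phi_lambda:
  assumes "t \<ge> 0" "0 < c" "c \<le> 1"
  shows "\<phi> (c * t) \<le> c powr p * \<phi> t"
proof -
  have "ennreal (\<phi> (c * t)) \<le> ennreal (c powr p * \<phi> t)"
    using Phi_lambda[OF assms] assms by (simp add: Phi_eq_phi ennreal_mult phi_nonneg)
  then show ?thesis using phi_nonneg by (simp add: ennreal_le_iff)
qed

lemma phi_delta2:
  assumes "t \<ge> 0"
  shows "\<phi> (2 * t) \<le> D * \<phi> t"
proof -
  have "ennreal (\<phi> (2 * t)) \<le> ennreal (D * \<phi> t)"
    using Phi_delta2[OF assms] assms D_ge_1 by (simp add: Phi_eq_phi ennreal_mult phi_nonneg)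
  then show ?thesis using phi_nonneg D_ge_1 by (simp add: ennreal_le_iff)
qed

lemma phi_le_ratio_powr: "0 < a \<Longrightarrow> a \<le> b \<Longrightarrow> \<phi> a \<le> (a / b) powr p * \<phi> b"
  using phi_lambda[of b "a / b"] by simp

lemma phi_grows_powr:
  assumes "0 < a" "1 \<le> X"
  shows "X powr p * \<phi> a \<le> \<phi> (X * a)"
proof -
  have "\<phi> a \<le> (a / (X * a)) powr p * \<phi> (X * a)"
    using assms by (intro phi_le_ratio_powr) auto
  also have "a / (X * a) = inverse X"
    using assms by (simp add: field_simps)
  finally have "\<phi> a \<le> inverse (X powr p) * \<phi> (X * a)"
    by (simp add: inverse_powr)
  then show ?thesis using assms by (simp add: field_simps)
qed

lemma phi_mono:
  assumes "0 \<le> s" "s \<le> t"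
  shows "\<phi> s \<le> \<phi> t"
proof (cases "s = 0")
  case True then show ?thesis by (simp add: phi_0 phi_nonneg)
next
  case False
  then have "\<phi> s \<le> (s / t) powr p * \<phi> t" using assms by (intro phi_le_ratio_powr) auto
  also have "\<dots> \<le> 1 * \<phi> t"
    using assms False p_gt_1 phi_nonneg by (intro mult_right_mono) (auto intro!: powr_le1)
  finally show ?thesis by simp
qed

lemma phi_power_two_le: "t \<ge> 0 \<Longrightarrow> \<phi> (2 ^ n * t) \<le> D ^ n * \<phi> t"
proof (induction n)
  case 0 then show ?case by simp
next
  case (Suc n)
  have "\<phi> (2 ^ Suc n * t) = \<phi> (2 * (2 ^ n * t))" by (simp add: mult.assoc)
  also have "\<dots> \<le> D * \<phi> (2 ^ n * t)" using Suc by (intro phi_delta2) auto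
  also have "\<dots> \<le> D * (D ^ n * \<phi> t)" using Suc D_ge_1 by (intro mult_left_mono) auto
  finally show ?case by simp
qed

lemma phi_pos:
  assumes t: "t > 0"
  shows "\<phi> t > 0"
proof (rule ccontr)
  assume "\<not> \<phi> t > 0"
  then have zero: "\<phi> t = 0" using phi_nonneg[of t] by simp
  have "eventually (\<lambda>x. \<Phi> x > 1) at_top"
    using Phi_at_top by (simp add: order_tendsto_iff)
  then obtain s where s: "\<And>x. x \<ge> s \<Longrightarrow> \<Phi> x > 1" by (auto simp: eventually_at_top_linorder)
  obtain n where "max s 0 / t < 2 ^ n" using real_arch_pow[of 2 "max s 0 / t"] by auto
  then have "max s 0 < 2 ^ n * t" using t by (simp add: field_simps)
  then have "\<Phi> (2 ^ n * t) > 1" using s by auto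
  moreover have "\<phi> (2 ^ n * t) \<le> 0" using phi_power_two_le[of t n] zero t by simp
  ultimately show False using Phi_eq_phi[of "2 ^ n * t"] t phi_nonneg[of "2 ^ n * t"] by simp
qed

lemma phi_mult_ratio_powr_le:
  assumes "0 < a" "a < v"
  shows "\<phi> a * (v / a) powr q \<le> \<phi> v * (a / v) powr (p - q)"
proof -
  have "\<phi> a * (v / a) powr q \<le> ((a / v) powr p * \<phi> v) * (v / a) powr q"
    using phi_le_ratio_powr[of a v] assms by (intro mult_right_mono) auto
  also have "(a / v) powr p * \<phi> v * (v / a) powr q = \<phi> v * (a / v) powr (p - q)"
    using assms by (simp add: powr_diff powr_divide field_simps)
  finally show ?thesis .
qed

lemma phi_dyadic_sum_below_le:
  assumes q: "q < p" and v: "v \<ge> 0"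
  shows "(\<integral>\<^sup>+k. ennreal (if dyadic k < v then \<phi> (dyadic k) * (v / dyadic k) powr q else 0) \<partial>count_space UNIV)
     \<le> ennreal (1 / (1 - 2 powr (q - p)) * \<phi> v)"
proof (cases "v = 0")
  case True then show ?thesis by (simp add: less_le_not_le[of _ 0] not_less order.strict_implies_order)
next
  case False
  then have v: "v > 0" using v by simp
  define m where "m = \<lceil>log 2 v\<rceil> - 1"
  have "(\<integral>\<^sup>+k. ennreal (if dyadic k < v then \<phi> (dyadic k) * (v / dyadic k) powr q else 0) \<partial>count_space UNIV)
     \<le> ennreal (\<phi> v / (1 - 2 powr (q - p)))"
  proof (rule nn_integral_int_le_geometric_down[where m=m])
    fix k :: int assume "k > m"
    then show "ennreal (if dyadic k < v then \<phi> (dyadic k) * (v / dyadic k) powr q else 0) = 0"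
      using dyadic_less_iff[OF v, of k] by (simp add: m_def)
  next
    fix k :: int assume k: "k \<le> m"
    then have kv: "dyadic k < v" using dyadic_less_iff[OF v, of k] by (simp add: m_def)
    have mv: "dyadic m < v" using dyadic_less_iff[OF v, of m] by (simp add: m_def)
    have "\<phi> (dyadic k) * (v / dyadic k) powr q \<le> \<phi> v * (dyadic k / v) powr (p - q)"
      using kv by (intro phi_mult_ratio_powr_le) auto
    also have "(dyadic k / v) powr (p - q) \<le> (dyadic k / dyadic m) powr (p - q)"
      using mv q v by (intro powr_mono2) (auto intro!: divide_left_mono less_imp_le[OF dyadic_pos] divide_nonneg_pos)
    also have "(dyadic k / dyadic m) powr (p - q) = (2 powr (q - p)) ^ nat (m - k)"
      using dyadic_ratio_powr[OF k, of "p - q"] by simp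
    finally have "\<phi> (dyadic k) * (v / dyadic k) powr q \<le> \<phi> v * (2 powr (q - p)) ^ nat (m - k)"
      using phi_nonneg[of v] by (simp add: mult_left_mono)
    then show "ennreal (if dyadic k < v then \<phi> (dyadic k) * (v / dyadic k) powr q else 0)
        \<le> ennreal (\<phi> v * (2 powr (q - p)) ^ nat (m - k))"
      using kv by (simp add: ennreal_leI)
  next
    show "0 \<le> 2 powr (q - p)" by simp
    show "2 powr (q - p) < 1" using q by (simp add: powr_less_one)
    show "0 \<le> \<phi> v" by (rule phi_nonneg)
  qed
  then show ?thesis by simp
qed

lemma phi_dyadic_term_above_le_geometric:
  assumes v: "v > 0" and q: "q > 0" and k: "\<lceil>log 2 v\<rceil> \<le> k"
  shows "\<phi> (dyadic k) * (v / dyadic k) powr q \<le> D * \<phi> v * (D * 2 powr (- q)) ^ nat (k - \<lceil>log 2 v\<rceil>)"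
proof -
  define m where "m = \<lceil>log 2 v\<rceil>"
  define n where "n = nat (k - m)"
  have k: "m \<le> k" using k by (simp add: m_def)
  have m1: "dyadic (m - 1) < v" using dyadic_less_iff[OF v, of "m - 1"] by (simp add: m_def)
  have mv: "v \<le> dyadic m" using dyadic_less_iff[OF v, of m] by (simp add: m_def)
  have "nat (k - (m - 1)) = Suc n" using k by (simp add: n_def)
  then have "\<phi> (dyadic k) = \<phi> (2 ^ Suc n * dyadic (m - 1))"
    using dyadic_eq_power_mult[of "m - 1" k] k by simp
  also have "\<dots> \<le> D ^ Suc n * \<phi> (dyadic (m - 1))"
    using phi_power_two_le[of "dyadic (m - 1)" "Suc n"] by (simp add: less_imp_le)
  also have "\<dots> \<le> D ^ Suc n * \<phi> v"
    using m1 D_ge_1 by (intro mult_left_mono phi_mono) (auto simp: less_imp_le)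
  finally have A: "\<phi> (dyadic k) \<le> D ^ Suc n * \<phi> v" .
  have "(v / dyadic k) powr q \<le> (dyadic m / dyadic k) powr q"
    using mv q v by (intro powr_mono2) (auto intro!: divide_right_mono less_imp_le[OF dyadic_pos] divide_nonneg_pos)
  also have "(dyadic m / dyadic k) powr q = (2 powr (- q)) ^ n"
    using dyadic_ratio_powr[OF k] by (simp add: n_def)
  finally have B: "(v / dyadic k) powr q \<le> (2 powr (- q)) ^ n" .
  have "\<phi> (dyadic k) * (v / dyadic k) powr q \<le> (D ^ Suc n * \<phi> v) * (2 powr (- q)) ^ n"
    using A B D_ge_1 by (intro mult_mono) (auto simp: phi_nonneg)
  also have "\<dots> = D * \<phi> v * (D * 2 powr (- q)) ^ n"
    by (simp add: power_mult_distrib)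
  finally show ?thesis by (simp add: n_def m_def)
qed

lemma phi_dyadic_sum_above_le:
  assumes q: "q > 0" and r: "D * 2 powr (- q) < 1" and v: "v \<ge> 0"
  shows "(\<integral>\<^sup>+k. ennreal (if v \<le> dyadic k then \<phi> (dyadic k) * (v / dyadic k) powr q else 0) \<partial>count_space UNIV)
     \<le> ennreal (D / (1 - D * 2 powr (- q)) * \<phi> v)"
proof (cases "v = 0")
  case True
  have "\<And>k. (if v \<le> dyadic k then \<phi> (dyadic k) * (v / dyadic k) powr q else 0) = 0" using True by simp
  then show ?thesis by simp
next
  case False
  then have v: "v > 0" using v by simp
  define m where "m = \<lceil>log 2 v\<rceil>"
  have "(\<integral>\<^sup>+k. ennreal (if v \<le> dyadic k then \<phi> (dyadic k) * (v / dyadic k) powr q else 0) \<partial>count_space UNIV)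
     \<le> ennreal ((D * \<phi> v) / (1 - D * 2 powr (- q)))"
  proof (rule nn_integral_int_le_geometric_up[where m=m])
    fix k :: int assume "k < m"
    then show "ennreal (if v \<le> dyadic k then \<phi> (dyadic k) * (v / dyadic k) powr q else 0) = 0"
      using dyadic_less_iff[OF v, of k] by (simp add: m_def not_le[symmetric])
  next
    fix k :: int assume k: "k \<ge> m"
    have "v \<le> dyadic k" using dyadic_less_iff[OF v, of k] k by (simp add: m_def)
    then show "ennreal (if v \<le> dyadic k then \<phi> (dyadic k) * (v / dyadic k) powr q else 0)
        \<le> ennreal (D * \<phi> v * (D * 2 powr (- q)) ^ nat (k - m))"
      using phi_dyadic_term_above_le_geometric[OF v q] k by (simp add: ennreal_leI m_def)
  next
    show "0 \<le> D * 2 powr (- q)" using D_ge_1 by simp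
    show "D * 2 powr (- q) < 1" by (rule r)
    show "0 \<le> D * \<phi> v" using D_ge_1 phi_nonneg by simp
  qed
  then show ?thesis by simp
qed

lemma measurable_phi:
  assumes V: "V \<in> borel_measurable M" and V_nonneg: "\<And>x. V x \<ge> 0"
  shows "(\<lambda>x. \<phi> (V x)) \<in> borel_measurable M"
proof -
  have "mono (\<lambda>t. \<phi> (max t 0))"
    by (auto simp: mono_def intro!: phi_mono)
  then have "(\<lambda>t. \<phi> (max t 0)) \<in> borel_measurable borel" by (rule borel_measurable_mono)
  then have "(\<lambda>x. \<phi> (max (V x) 0)) \<in> borel_measurable M"
    using V by (rule measurable_compose[rotated])
  then show ?thesis using V_nonneg by (simp add: max_absorb1)
qed

lemma measurable_Phi:
  assumes "V \<in> borel_measurable M" "\<And>x. V x \<ge> 0"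
  shows "(\<lambda>x. \<Phi> (V x)) \<in> borel_measurable M"
proof -
  have "(\<lambda>x. ennreal (\<phi> (V x))) \<in> borel_measurable M"
    using measurable_phi[OF assms] by measurable
  then show ?thesis using assms(2) by (simp add: Phi_eq_phi)
qed

lemma phi_quarter_le_dyadic_sum:
  fixes a b :: "int \<Rightarrow> real"
  assumes u: "u \<ge> 0" and ab: "\<And>k. 2 * dyadic k < u \<Longrightarrow> 1 \<le> a k + b k"
    and a0: "\<And>k. a k \<ge> 0" and b0: "\<And>k. b k \<ge> 0"
  shows "ennreal (\<phi> (u/4)) \<le> (\<integral>\<^sup>+k. ennreal (\<phi> (dyadic k) * a k) + ennreal (\<phi> (dyadic k) * b k) \<partial>count_space UNIV)"
proof (cases "u = 0")
  case True then show ?thesis by (simp add: phi_0)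
next
  case False
  then have u: "u > 0" using u by simp
  define k0 where "k0 = \<lceil>log 2 u\<rceil> - 2"
  have "dyadic (k0 + 1) < u" using dyadic_less_iff[OF u, of "k0+1"] by (simp add: k0_def)
  then have lt: "2 * dyadic k0 < u" using dyadic_add[of k0 1] by (simp add: dyadic_def)
  have "\<not> dyadic (k0 + 2) < u" using dyadic_less_iff[OF u, of "k0+2"] by (simp add: k0_def)
  then have "u \<le> 4 * dyadic k0" using dyadic_add[of k0 2] by (simp add: dyadic_def)
  then have "\<phi> (u/4) \<le> \<phi> (dyadic k0)" using u by (intro phi_mono) auto
  also have "\<dots> \<le> \<phi> (dyadic k0) * (a k0 + b k0)"
    using ab[OF lt] phi_nonneg[of "dyadic k0"] by (simp add: mult_le_cancel_left1)
  finally have "ennreal (\<phi> (u/4)) \<le> ennreal (\<phi> (dyadic k0) * a k0) + ennreal (\<phi> (dyadic k0) * b k0)"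
    using a0 b0 phi_nonneg by (simp add: ennreal_plus[symmetric] distrib_left ennreal_leI del: ennreal_plus)
  also have "\<dots> \<le> (\<integral>\<^sup>+k. ennreal (\<phi> (dyadic k) * a k) + ennreal (\<phi> (dyadic k) * b k) \<partial>count_space UNIV)"
    by (rule nn_integral_ge_point) simp
  finally show ?thesis .
qed

lemma weak_modular_distrib_fun_le:
  fixes f :: "real^'n \<Rightarrow> complex"
  assumes weak: "\<And>t. t > 0 \<Longrightarrow> \<Phi> (t / l) * distrib_fun f t \<le> 1" and l: "l > 0"
    and t: "t > 0" and a: "a \<ge> 0"
  shows "ennreal a * distrib_fun f t \<le> ennreal (a / \<phi> (t / l))"
proof -
  have pos: "\<phi> (t / l) > 0" using t l by (intro phi_pos) simp
  have "ennreal a = ennreal (a / \<phi> (t / l)) * \<Phi> (t / l)"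
    using pos a t l by (simp add: Phi_eq_phi ennreal_mult[symmetric])
  then have "ennreal a * distrib_fun f t = ennreal (a / \<phi> (t / l)) * (\<Phi> (t / l) * distrib_fun f t)"
    by (simp only: mult.assoc)
  also have "\<dots> \<le> ennreal (a / \<phi> (t / l))"
    using mult_left_mono[OF weak[OF t], of "ennreal (a / \<phi> (t / l))"] by simp
  finally show ?thesis .
qed

lemma Phi_divide_le:
  assumes "t \<ge> 0" "K \<ge> 1"
  shows "\<Phi> (t / K) \<le> ennreal (1 / K) * \<Phi> t"
proof -
  have "\<Phi> ((1 / K) * t) \<le> ennreal ((1 / K) powr p) * \<Phi> t"
    using assms by (intro Phi_lambda) auto
  also have "\<dots> \<le> ennreal (1 / K) * \<Phi> t"
  proof -
    have "(1 / K) powr p \<le> (1 / K) powr 1" using assms p_gt_1 by (intro powr_mono') auto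
    then show ?thesis using assms by (intro mult_right_mono ennreal_leI) auto
  qed
  finally show ?thesis by simp
qed

lemma nn_integral_Phi_divide_le:
  assumes h: "h \<in> borel_measurable M" and ae: "AE x in M. g x = h x"
    and c: "c > 0" and K: "K \<ge> 1"
  shows "(\<integral>\<^sup>+x. \<Phi> (cmod (g x) / (K * c)) \<partial>M) \<le> ennreal (1 / K) * (\<integral>\<^sup>+x. \<Phi> (cmod (g x) / c) \<partial>M)"
proof -
  have "(\<integral>\<^sup>+x. \<Phi> (cmod (g x) / (K * c)) \<partial>M) \<le> (\<integral>\<^sup>+x. ennreal (1 / K) * \<Phi> (cmod (h x) / c) \<partial>M)"
    using ae
  proof (intro nn_integral_mono_AE, eventually_elim)
    case (elim x)
    show ?case using Phi_divide_le[of "cmod (g x) / c" K] c K elim by (simp add: mult.commute)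
  qed
  also have "\<dots> = ennreal (1 / K) * (\<integral>\<^sup>+x. \<Phi> (cmod (h x) / c) \<partial>M)"
    using h c by (intro nn_integral_cmult measurable_Phi) auto
  also have "(\<integral>\<^sup>+x. \<Phi> (cmod (h x) / c) \<partial>M) = (\<integral>\<^sup>+x. \<Phi> (cmod (g x) / c) \<partial>M)"
    using ae by (intro nn_integral_cong_AE) auto
  finally show ?thesis .
qed

lemma phi_dyadic_term_below_le:
  assumes "q < p" "v \<ge> 0"
  shows "(if dyadic k < v then \<phi> (dyadic k) * (v / dyadic k) powr q else 0)
    \<le> 1 / (1 - 2 powr (q - p)) * \<phi> v"
proof -
  have "ennreal (if dyadic k < v then \<phi> (dyadic k) * (v / dyadic k) powr q else 0)
      \<le> (\<integral>\<^sup>+k. ennreal (if dyadic k < v then \<phi> (dyadic k) * (v / dyadic k) powr q else 0) \<partial>count_space UNIV)"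
    by (rule nn_integral_ge_point) simp
  also have "\<dots> \<le> ennreal (1 / (1 - 2 powr (q - p)) * \<phi> v)"
    using assms by (rule phi_dyadic_sum_below_le)
  finally show ?thesis
    using assms by (subst (asm) ennreal_le_iff) (auto intro!: divide_nonneg_nonneg phi_nonneg
        simp: powr_less_one less_imp_le)
qed

lemma phi_dyadic_term_above_le:
  assumes "q > 0" "D * 2 powr (- q) < 1" "v \<ge> 0"
  shows "(if v \<le> dyadic k then \<phi> (dyadic k) * (v / dyadic k) powr q else 0)
    \<le> D / (1 - D * 2 powr (- q)) * \<phi> v"
proof -
  have "ennreal (if v \<le> dyadic k then \<phi> (dyadic k) * (v / dyadic k) powr q else 0)
      \<le> (\<integral>\<^sup>+k. ennreal (if v \<le> dyadic k then \<phi> (dyadic k) * (v / dyadic k) powr q else 0) \<partial>count_space UNIV)"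
    by (rule nn_integral_ge_point) simp
  also have "\<dots> \<le> ennreal (D / (1 - D * 2 powr (- q)) * \<phi> v)"
    using assms by (rule phi_dyadic_sum_above_le)
  finally show ?thesis
    using assms D_ge_1 by (subst (asm) ennreal_le_iff)
      (auto intro!: divide_nonneg_nonneg mult_nonneg_nonneg phi_nonneg)
qed

definition dyadic_term :: "real \<Rightarrow> real \<Rightarrow> int \<Rightarrow> ('a \<Rightarrow> complex) \<Rightarrow> 'a \<Rightarrow> real" where
  "dyadic_term q l k g x = \<phi> (dyadic k) * (cmod (g x) / (l * dyadic k)) powr q"

lemma measurable_dyadic_term [measurable]:
  assumes "g \<in> borel_measurable M"
  shows "(\<lambda>x. dyadic_term q l k g x) \<in> borel_measurable M"
  using assms unfolding dyadic_term_def by measurable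

lemma dyadic_term_nonneg: "l > 0 \<Longrightarrow> dyadic_term q l k g x \<ge> 0"
  by (simp add: dyadic_term_def phi_nonneg)

lemma dyadic_term_high_part:
  assumes "l > 0"
  shows "dyadic_term q l k (high_part (l * dyadic k) f) x
    = (if dyadic k < cmod (f x) / l then \<phi> (dyadic k) * (cmod (f x) / l / dyadic k) powr q else 0)"
  using assms by (auto simp: dyadic_term_def high_part_def field_simps)

lemma dyadic_term_low_part:
  assumes "l > 0"
  shows "dyadic_term q l k (low_part (l * dyadic k) f) x
    = (if cmod (f x) / l \<le> dyadic k then \<phi> (dyadic k) * (cmod (f x) / l / dyadic k) powr q else 0)"
  using assms by (auto simp: dyadic_term_def low_part_def field_simps)

lemma in_Lp_if_dominated_by_modular:
  fixes f g :: "real^'n \<Rightarrow> complex"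
  assumes g: "g \<in> borel_measurable lebesgue" and f: "f \<in> borel_measurable lebesgue"
    and l: "l > 0" and modular: "(\<integral>\<^sup>+x. \<Phi> (cmod (f x) / l) \<partial>lebesgue) < \<infinity>"
    and c: "c \<ge> 0" and dom: "\<And>x. cmod (g x) powr q \<le> c * \<phi> (cmod (f x) / l)"
  shows "in_Lp q g"
  unfolding in_Lp_iff_nn_integral
proof (intro conjI g)
  have "(\<integral>\<^sup>+x. ennreal (cmod (g x) powr q) \<partial>lebesgue)
      \<le> (\<integral>\<^sup>+x. ennreal c * \<Phi> (cmod (f x) / l) \<partial>lebesgue)"
    using dom c l by (intro nn_integral_mono) (simp add: Phi_eq_phi ennreal_mult[symmetric] phi_nonneg)
  also have "\<dots> = ennreal c * (\<integral>\<^sup>+x. \<Phi> (cmod (f x) / l) \<partial>lebesgue)"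
    using f l by (intro nn_integral_cmult measurable_Phi) auto
  also have "\<dots> < \<infinity>" using modular by (simp add: ennreal_mult_less_top)
  finally show "(\<integral>\<^sup>+x. ennreal (cmod (g x) powr q) \<partial>lebesgue) < \<infinity>" .
qed

lemma high_part_in_Lp:
  fixes f :: "real^'n \<Rightarrow> complex"
  assumes f: "f \<in> borel_measurable lebesgue" and l: "l > 0"
    and modular: "(\<integral>\<^sup>+x. \<Phi> (cmod (f x) / l) \<partial>lebesgue) < \<infinity>" and q: "q < p"
  shows "in_Lp q (high_part (l * dyadic k) f)"
proof (rule in_Lp_if_dominated_by_modular[OF _ f l modular])
  define r where "r = l * dyadic k"
  have r: "r > 0" and pos: "\<phi> (dyadic k) > 0" using l by (simp_all add: r_def phi_pos)
  fix x
  have "cmod (high_part r f x) powr q = r powr q / \<phi> (dyadic k) * dyadic_term q l k (high_part r f) x"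
    using r pos by (simp add: dyadic_term_def r_def[symmetric] powr_divide)
  also have "\<dots> \<le> r powr q / \<phi> (dyadic k) * (1 / (1 - 2 powr (q - p)) * \<phi> (cmod (f x) / l))"
    unfolding r_def dyadic_term_high_part[OF l] using pos q l
    by (intro mult_left_mono phi_dyadic_term_below_le) auto
  finally show "cmod (high_part (l * dyadic k) f x) powr q
      \<le> r powr q / \<phi> (dyadic k) / (1 - 2 powr (q - p)) * \<phi> (cmod (f x) / l)"
    by (simp add: r_def)
  show "0 \<le> r powr q / \<phi> (dyadic k) / (1 - 2 powr (q - p))"
    using pos q by (simp add: powr_less_one less_imp_le)
qed (use f in measurable)

lemma low_part_in_Lp:
  fixes f :: "real^'n \<Rightarrow> complex"
  assumes f: "f \<in> borel_measurable lebesgue" and l: "l > 0"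
    and modular: "(\<integral>\<^sup>+x. \<Phi> (cmod (f x) / l) \<partial>lebesgue) < \<infinity>"
    and q: "q > 0" "D * 2 powr (- q) < 1"
  shows "in_Lp q (low_part (l * dyadic k) f)"
proof (rule in_Lp_if_dominated_by_modular[OF _ f l modular])
  define r where "r = l * dyadic k"
  have r: "r > 0" and pos: "\<phi> (dyadic k) > 0" using l by (simp_all add: r_def phi_pos)
  fix x
  have "cmod (low_part r f x) powr q = r powr q / \<phi> (dyadic k) * dyadic_term q l k (low_part r f) x"
    using r pos by (simp add: dyadic_term_def r_def[symmetric] powr_divide)
  also have "\<dots> \<le> r powr q / \<phi> (dyadic k) * (D / (1 - D * 2 powr (- q)) * \<phi> (cmod (f x) / l))"
    unfolding r_def dyadic_term_low_part[OF l] using pos q l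
    by (intro mult_left_mono phi_dyadic_term_above_le) auto
  finally show "cmod (low_part (l * dyadic k) f x) powr q
      \<le> r powr q / \<phi> (dyadic k) * D / (1 - D * 2 powr (- q)) * \<phi> (cmod (f x) / l)"
    by (simp add: r_def)
  show "0 \<le> r powr q / \<phi> (dyadic k) * D / (1 - D * 2 powr (- q))"
    using pos q D_ge_1 by simp
qed (use f in measurable)

lemma dyadic_sum_truncations_le:
  assumes l: "l > 0" and q0: "q0 < p" and q1: "q1 > 0" "D * 2 powr (- q1) < 1"
    and C0: "C0 \<ge> 0" and C1: "C1 \<ge> 0"
  shows "(\<integral>\<^sup>+k. ennreal (C0 * dyadic_term q0 l k (high_part (l * dyadic k) f) x)
      + ennreal (C1 * dyadic_term q1 l k (low_part (l * dyadic k) f) x) \<partial>count_space UNIV)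
    \<le> ennreal ((C0 * (1 / (1 - 2 powr (q0 - p))) + C1 * (D / (1 - D * 2 powr (- q1))))
        * \<phi> (cmod (f x) / l))"
proof -
  define v where "v = cmod (f x) / l"
  have v: "v \<ge> 0" using l by (simp add: v_def)
  have "(\<integral>\<^sup>+k. ennreal (C0 * dyadic_term q0 l k (high_part (l * dyadic k) f) x)
      + ennreal (C1 * dyadic_term q1 l k (low_part (l * dyadic k) f) x) \<partial>count_space UNIV)
    = ennreal C0 * (\<integral>\<^sup>+k. ennreal (if dyadic k < v then \<phi> (dyadic k) * (v / dyadic k) powr q0 else 0) \<partial>count_space UNIV)
      + ennreal C1 * (\<integral>\<^sup>+k. ennreal (if v \<le> dyadic k then \<phi> (dyadic k) * (v / dyadic k) powr q1 else 0) \<partial>count_space UNIV)"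
    unfolding v_def using C0 C1 l
    by (simp add: dyadic_term_high_part dyadic_term_low_part ennreal_mult phi_nonneg
        nn_integral_add nn_integral_cmult)
  also have "\<dots> \<le> ennreal C0 * ennreal (1 / (1 - 2 powr (q0 - p)) * \<phi> v)
      + ennreal C1 * ennreal (D / (1 - D * 2 powr (- q1)) * \<phi> v)"
    using q0 q1 v by (intro add_mono mult_left_mono phi_dyadic_sum_below_le phi_dyadic_sum_above_le) auto
  also have "\<dots> = ennreal ((C0 * (1 / (1 - 2 powr (q0 - p))) + C1 * (D / (1 - D * 2 powr (- q1)))) * \<phi> v)"
    using C0 C1 q0 q1 D_ge_1 phi_nonneg[of v]
    by (simp add: ennreal_mult[symmetric] ennreal_plus[symmetric] algebra_simps powr_less_one less_imp_le
        del: ennreal_plus)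
  finally show ?thesis by (simp add: v_def)
qed

lemma high_part_weak_bound:
  fixes f :: "real^'n \<Rightarrow> complex"
  assumes f: "f \<in> borel_measurable lebesgue" and l: "l > 0"
    and weak: "\<And>t. t > 0 \<Longrightarrow> \<Phi> (t / l) * distrib_fun f t \<le> 1"
    and s: "s > 0" and q: "0 < q" "q < p"
  shows "(\<integral>\<^sup>+x. ennreal ((cmod (high_part s f x) / s) powr q) \<partial>lebesgue)
    \<le> ennreal (2 powr q / \<phi> (s / l) / (1 - 2 powr (q - p)))"
proof (rule nn_integral_le_geometric_layers[where a="\<lambda>k. dyadic (int k + 1) powr q"
      and A="\<lambda>k. {y. s * dyadic (int k) < cmod (f y)}"])
  fix x
  show "ennreal ((cmod (high_part s f x) / s) powr q)
      \<le> (\<integral>\<^sup>+k. ennreal (dyadic (int k + 1) powr q) * indicator {y. s * dyadic (int k) < cmod (f y)} x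
          \<partial>count_space UNIV)"
    using s q by (intro high_part_powr_le_layers) auto
next
  fix k :: nat
  show "{y. s * dyadic (int k) < cmod (f y)} \<in> sets lebesgue" by (rule sets_lebesgue_norm_greater[OF f])
next
  fix k :: nat
  define F where "F = \<phi> (s / l)"
  have F: "F > 0" unfolding F_def using s l by (intro phi_pos) simp
  have dk: "dyadic (int k) \<ge> 1" by (simp add: dyadic_def ge_one_powr_ge_zero)
  have grow: "dyadic (int k) powr p * F \<le> \<phi> (dyadic (int k) * (s / l))"
    unfolding F_def using s l dk by (intro phi_grows_powr) auto
  have "ennreal (dyadic (int k + 1) powr q) * emeasure lebesgue {y. s * dyadic (int k) < cmod (f y)}
      \<le> ennreal (dyadic (int k + 1) powr q / \<phi> (s * dyadic (int k) / l))"
    using weak_modular_distrib_fun_le[OF weak l, of "s * dyadic (int k)" "dyadic (int k + 1) powr q"] s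
    by (simp add: distrib_fun_def)
  also have "dyadic (int k + 1) powr q / \<phi> (s * dyadic (int k) / l)
      = 2 powr q * dyadic (int k) powr q / \<phi> (dyadic (int k) * (s / l))"
    using dyadic_add[of "int k" 1] by (simp add: dyadic_def powr_mult mult.commute)
  also have "\<dots> \<le> 2 powr q * dyadic (int k) powr q / (dyadic (int k) powr p * F)"
    using grow F s l by (intro divide_left_mono mult_pos_pos) (auto intro!: phi_pos simp: dyadic_def)
  also have "\<dots> = 2 powr q / F * (2 powr (q - p)) ^ k"
  proof -
    have "(2 powr (q - p)) ^ k = dyadic (int k) powr q / dyadic (int k) powr p"
      by (simp add: dyadic_def powr_realpow[symmetric] powr_powr powr_diff[symmetric] algebra_simps)
    moreover have "dyadic (int k) powr p > 0" by (simp add: dyadic_def)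
    ultimately show ?thesis using F by (simp add: field_simps)
  qed
  finally show "ennreal (dyadic (int k + 1) powr q) * emeasure lebesgue {y. s * dyadic (int k) < cmod (f y)}
      \<le> ennreal (2 powr q / \<phi> (s / l) * (2 powr (q - p)) ^ k)"
    by (simp add: F_def ennreal_leI)
qed (use s l q in \<open>auto simp: phi_pos powr_less_one less_imp_le\<close>)

lemma low_part_weak_bound:
  fixes f :: "real^'n \<Rightarrow> complex"
  assumes f: "f \<in> borel_measurable lebesgue" and l: "l > 0"
    and weak: "\<And>t. t > 0 \<Longrightarrow> \<Phi> (t / l) * distrib_fun f t \<le> 1"
    and s: "s > 0" and q: "0 < q" "D * 2 powr (- q) < 1"
  shows "(\<integral>\<^sup>+x. ennreal ((cmod (low_part s f x) / s) powr q) \<partial>lebesgue)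
    \<le> ennreal (D / \<phi> (s / l) / (1 - D * 2 powr (- q)))"
proof (rule nn_integral_le_geometric_layers[where a="\<lambda>k. dyadic (- int k) powr q"
      and A="\<lambda>k. {y. s * dyadic (- int k - 1) < cmod (f y)}"])
  fix x
  show "ennreal ((cmod (low_part s f x) / s) powr q)
      \<le> (\<integral>\<^sup>+k. ennreal (dyadic (- int k) powr q) * indicator {y. s * dyadic (- int k - 1) < cmod (f y)} x
          \<partial>count_space UNIV)"
    using s q by (intro low_part_powr_le_layers) auto
next
  fix k :: nat
  show "{y. s * dyadic (- int k - 1) < cmod (f y)} \<in> sets lebesgue" by (rule sets_lebesgue_norm_greater[OF f])
next
  fix k :: nat
  define F where "F = \<phi> (s / l)"
  define y where "y = s * dyadic (- int k - 1) / l"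
  have y: "y > 0" using s l by (simp add: y_def)
  have "s / l = 2 ^ Suc k * y"
    using dyadic_eq_power_mult[of "- int k - 1" 0] by (simp add: y_def dyadic_def nat_add_distrib)
  then have Fy: "F \<le> D ^ Suc k * \<phi> y"
    unfolding F_def using y phi_power_two_le[of y "Suc k"] by simp
  have F: "F > 0" unfolding F_def using s l by (intro phi_pos) simp
  have "ennreal (dyadic (- int k) powr q) * emeasure lebesgue {y. s * dyadic (- int k - 1) < cmod (f y)}
      \<le> ennreal (dyadic (- int k) powr q / \<phi> y)"
    using weak_modular_distrib_fun_le[OF weak l, of "s * dyadic (- int k - 1)" "dyadic (- int k) powr q"] s
    by (simp add: distrib_fun_def y_def)
  also have "dyadic (- int k) powr q / \<phi> y = (dyadic (- int k) powr q * D ^ Suc k) / (D ^ Suc k * \<phi> y)"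
    using D_ge_1 by simp
  also have "\<dots> \<le> (dyadic (- int k) powr q * D ^ Suc k) / F"
    using Fy F D_ge_1 y by (intro divide_left_mono mult_pos_pos) (auto intro!: phi_pos)
  also have "\<dots> = D / F * (D * 2 powr (- q)) ^ k"
    by (simp add: dyadic_def powr_realpow[symmetric] powr_powr power_mult_distrib field_simps)
  finally show "ennreal (dyadic (- int k) powr q) * emeasure lebesgue {y. s * dyadic (- int k - 1) < cmod (f y)}
      \<le> ennreal (D / \<phi> (s / l) * (D * 2 powr (- q)) ^ k)"
    by (simp add: F_def ennreal_leI)
qed (use s l q D_ge_1 phi_nonneg in auto)

end

section \<open>Interpolation between \<open>L\<^sup>q\<^sup>0\<close> and \<open>L\<^sup>q\<^sup>1\<close>\<close>

locale lp_interpolation = young_growth +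
  fixes T :: "(real^'n \<Rightarrow> complex) \<Rightarrow> (real^'n \<Rightarrow> complex)" and q0 q1 C0 C1 :: real
  assumes q0_gt_1: "1 < q0" and q0_less_p: "q0 < p"
    and q1_gt_1: "1 < q1" and q1_large: "D * 2 powr (- q1) < 1" \<comment> \<open>i.e. q1 > log2 D\<close>
    and C0_nonneg: "C0 \<ge> 0" and C1_nonneg: "C1 \<ge> 0"
    and T_bounded_q0: "Lp_bounded q0 C0 T" and T_bounded_q1: "Lp_bounded q1 C1 T"
    and T_additive: "Lp_sum_additive q0 q1 T"
begin

lemma T_measurable_q0: "in_Lp q0 g \<Longrightarrow> T g \<in> borel_measurable lebesgue"
  using T_bounded_q0 by (simp add: Lp_bounded_def in_Lp_def)

lemma T_measurable_q1: "in_Lp q1 g \<Longrightarrow> T g \<in> borel_measurable lebesgue"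
  using T_bounded_q1 by (simp add: Lp_bounded_def in_Lp_def)

lemma T_split_AE:
  assumes "in_Lp q0 (high_part r f)" "in_Lp q1 (low_part r f)"
  shows "AE x in lebesgue. T f x = T (high_part r f) x + T (low_part r f) x"
proof -
  have "AE x in lebesgue. T (\<lambda>y. high_part r f y + low_part r f y) x
      = T (high_part r f) x + T (low_part r f) x"
    using T_additive assms unfolding Lp_sum_additive_def by blast
  then show ?thesis by (simp only: high_part_plus_low_part)
qed

lemma modular_T_le_dyadic_sum:
  assumes f: "f \<in> borel_measurable lebesgue" and l: "l > 0"
    and modular: "(\<integral>\<^sup>+x. \<Phi> (cmod (f x) / l) \<partial>lebesgue) < \<infinity>"
  shows "AE x in lebesgue. \<Phi> (cmod (T f x) / (4 * l))
    \<le> (\<integral>\<^sup>+k. ennreal (dyadic_term q0 l k (T (high_part (l * dyadic k) f)) x)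
        + ennreal (dyadic_term q1 l k (T (low_part (l * dyadic k) f)) x) \<partial>count_space UNIV)"
proof -
  define r where "r k = l * dyadic k" for k
  have r: "r k > 0" for k using l by (simp add: r_def)
  have "AE x in lebesgue. \<forall>k. T f x = T (high_part (r k) f) x + T (low_part (r k) f) x"
    unfolding AE_all_countable r_def using f l modular q0_less_p q1_gt_1 q1_large
    by (intro allI T_split_AE high_part_in_Lp low_part_in_Lp) auto
  then show ?thesis
  proof eventually_elim
    case (elim x)
    have "\<Phi> (cmod (T f x) / (4 * l)) = ennreal (\<phi> (cmod (T f x) / l / 4))"
      using Phi_eq_phi[of "cmod (T f x) / l / 4"] l by (simp add: mult.commute)
    also have "\<dots> \<le> (\<integral>\<^sup>+k. ennreal (\<phi> (dyadic k) * (cmod (T (high_part (r k) f) x) / r k) powr q0)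
        + ennreal (\<phi> (dyadic k) * (cmod (T (low_part (r k) f) x) / r k) powr q1) \<partial>count_space UNIV)"
    proof (rule phi_quarter_le_dyadic_sum)
      fix k assume "2 * dyadic k < cmod (T f x) / l"
      then have "2 * r k < cmod (T f x)" using l by (simp add: r_def field_simps)
      also have "\<dots> \<le> cmod (T (high_part (r k) f) x) + cmod (T (low_part (r k) f) x)"
        using elim[rule_format, of k] by (simp add: norm_triangle_ineq)
      finally have above: "r k < cmod (T (high_part (r k) f) x) \<or> r k < cmod (T (low_part (r k) f) x)"
        by auto
      show "1 \<le> (cmod (T (high_part (r k) f) x) / r k) powr q0
          + (cmod (T (low_part (r k) f) x) / r k) powr q1"
        using one_le_powr_add_powr[OF r[of k] _ _ above] q0_gt_1 q1_gt_1 by simp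
    qed (use l in simp_all)
    finally show ?case by (simp add: dyadic_term_def r_def)
  qed
qed

definition orlicz_const :: real where
  "orlicz_const = C0 * (1 / (1 - 2 powr (q0 - p))) + C1 * (D / (1 - D * 2 powr (- q1)))"

lemma orlicz_const_nonneg: "orlicz_const \<ge> 0"
  using C0_nonneg C1_nonneg q0_less_p q1_large D_ge_1
  by (simp add: orlicz_const_def powr_less_one less_imp_le)

lemma nn_integral_dyadic_terms_T_le:
  assumes l: "l > 0" and g: "in_Lp q0 g" and h: "in_Lp q1 h"
  shows "(\<integral>\<^sup>+x. ennreal (dyadic_term q0 l k (T g) x) + ennreal (dyadic_term q1 l k (T h) x) \<partial>lebesgue)
    \<le> (\<integral>\<^sup>+x. ennreal (C0 * dyadic_term q0 l k g x) + ennreal (C1 * dyadic_term q1 l k h x) \<partial>lebesgue)"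
proof -
  have g_m: "g \<in> borel_measurable lebesgue" and h_m: "h \<in> borel_measurable lebesgue"
    and Tg_m: "T g \<in> borel_measurable lebesgue" and Th_m: "T h \<in> borel_measurable lebesgue"
    using g h T_measurable_q0 T_measurable_q1 by (auto simp: in_Lp_def)
  have "(\<integral>\<^sup>+x. ennreal (dyadic_term q0 l k (T g) x) + ennreal (dyadic_term q1 l k (T h) x) \<partial>lebesgue)
      = (\<integral>\<^sup>+x. ennreal (dyadic_term q0 l k (T g) x) \<partial>lebesgue)
        + (\<integral>\<^sup>+x. ennreal (dyadic_term q1 l k (T h) x) \<partial>lebesgue)"
    using Tg_m Th_m by (intro nn_integral_add; measurable)
  also have "\<dots> \<le> ennreal C0 * (\<integral>\<^sup>+x. ennreal (dyadic_term q0 l k g x) \<partial>lebesgue)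
        + ennreal C1 * (\<integral>\<^sup>+x. ennreal (dyadic_term q1 l k h x) \<partial>lebesgue)"
    unfolding dyadic_term_def using l
    by (intro add_mono Lp_bounded_nn_integral_le T_bounded_q0 T_bounded_q1 g h
        C0_nonneg C1_nonneg phi_nonneg) auto
  also have "\<dots> = (\<integral>\<^sup>+x. ennreal (C0 * dyadic_term q0 l k g x) + ennreal (C1 * dyadic_term q1 l k h x) \<partial>lebesgue)"
    using g_m h_m C0_nonneg C1_nonneg l
    by (simp add: nn_integral_add nn_integral_cmult ennreal_mult dyadic_term_nonneg)
  finally show ?thesis .
qed

lemma modular_T_le:
  assumes f: "f \<in> borel_measurable lebesgue" and l: "l > 0"
    and modular: "(\<integral>\<^sup>+x. \<Phi> (cmod (f x) / l) \<partial>lebesgue) \<le> 1"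
  shows "(\<integral>\<^sup>+x. \<Phi> (cmod (T f x) / (4 * l)) \<partial>lebesgue) \<le> ennreal orlicz_const"
proof -
  define hi where "hi k = high_part (l * dyadic k) f" for k
  define lo where "lo k = low_part (l * dyadic k) f" for k
  have finite: "(\<integral>\<^sup>+x. \<Phi> (cmod (f x) / l) \<partial>lebesgue) < \<infinity>"
    using modular by (simp add: le_less_trans)
  have hi: "in_Lp q0 (hi k)" and lo: "in_Lp q1 (lo k)" for k
    unfolding hi_def lo_def using f l finite q0_less_p q1_gt_1 q1_large
    by (auto intro: high_part_in_Lp low_part_in_Lp)
  define S where "S k x = ennreal (dyadic_term q0 l k (T (hi k)) x) + ennreal (dyadic_term q1 l k (T (lo k)) x)"
    for k x
  define R where "R k x = ennreal (C0 * dyadic_term q0 l k (hi k) x) + ennreal (C1 * dyadic_term q1 l k (lo k) x)"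
    for k x
  have hi_m: "hi k \<in> borel_measurable lebesgue" and lo_m: "lo k \<in> borel_measurable lebesgue"
    and Thi_m: "T (hi k) \<in> borel_measurable lebesgue" and Tlo_m: "T (lo k) \<in> borel_measurable lebesgue"
    for k using hi lo T_measurable_q0 T_measurable_q1 by (auto simp: in_Lp_def)
  have S_m: "S k \<in> borel_measurable lebesgue" and R_m: "R k \<in> borel_measurable lebesgue" for k
    unfolding S_def R_def using Thi_m Tlo_m hi_m lo_m by measurable
  have "(\<integral>\<^sup>+x. \<Phi> (cmod (T f x) / (4 * l)) \<partial>lebesgue)
      \<le> (\<integral>\<^sup>+x. \<integral>\<^sup>+k. S k x \<partial>count_space UNIV \<partial>lebesgue)"
    unfolding S_def hi_def lo_def
    using modular_T_le_dyadic_sum[OF f l finite] by (rule nn_integral_mono_AE)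
  also have "\<dots> = (\<integral>\<^sup>+k. \<integral>\<^sup>+x. S k x \<partial>lebesgue \<partial>count_space UNIV)"
    using S_m by (intro nn_integral_count_space_nn_integral) auto
  also have "\<dots> \<le> (\<integral>\<^sup>+k. \<integral>\<^sup>+x. R k x \<partial>lebesgue \<partial>count_space UNIV)"
    unfolding S_def R_def using l hi lo by (intro nn_integral_mono nn_integral_dyadic_terms_T_le)
  also have "\<dots> = (\<integral>\<^sup>+x. \<integral>\<^sup>+k. R k x \<partial>count_space UNIV \<partial>lebesgue)"
    using R_m by (intro nn_integral_count_space_nn_integral[symmetric]) auto
  also have "\<dots> \<le> (\<integral>\<^sup>+x. ennreal orlicz_const * \<Phi> (cmod (f x) / l) \<partial>lebesgue)"
    unfolding R_def hi_def lo_def orlicz_const_def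
    using l q0_less_p q1_gt_1 q1_large C0_nonneg C1_nonneg orlicz_const_nonneg[unfolded orlicz_const_def]
    by (intro nn_integral_mono order_trans[OF dyadic_sum_truncations_le])
      (auto simp: Phi_eq_phi ennreal_mult'[symmetric] phi_nonneg)
  also have "\<dots> = ennreal orlicz_const * (\<integral>\<^sup>+x. \<Phi> (cmod (f x) / l) \<partial>lebesgue)"
    using f l by (intro nn_integral_cmult measurable_Phi) auto
  also have "\<dots> \<le> ennreal orlicz_const"
    using mult_left_mono[OF modular, of "ennreal orlicz_const"] by simp
  finally show ?thesis .
qed

lemma T_AE_eq_measurable:
  assumes f: "f \<in> borel_measurable lebesgue" and l: "l > 0"
    and modular: "(\<integral>\<^sup>+x. \<Phi> (cmod (f x) / l) \<partial>lebesgue) < \<infinity>"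
  obtains h where "h \<in> borel_measurable lebesgue" "AE x in lebesgue. T f x = h x"
proof -
  have hi: "in_Lp q0 (high_part (l * dyadic 0) f)" and lo: "in_Lp q1 (low_part (l * dyadic 0) f)"
    using f l modular q0_less_p q1_gt_1 q1_large by (auto intro: high_part_in_Lp low_part_in_Lp)
  show thesis
  proof
    show "(\<lambda>x. T (high_part (l * dyadic 0) f) x + T (low_part (l * dyadic 0) f) x) \<in> borel_measurable lebesgue"
      using T_measurable_q0[OF hi] T_measurable_q1[OF lo] by measurable
  qed (rule T_split_AE[OF hi lo])
qed

lemma orlicz_norm_T_le:
  assumes "f \<in> orlicz_space \<Phi>"
  shows "orlicz_norm \<Phi> (T f) \<le> ennreal (4 * max 1 orlicz_const) * orlicz_norm \<Phi> f"
  unfolding orlicz_norm_def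
proof (rule Inf_ennreal_scale_le)
  define K where "K = max 1 orlicz_const"
  have K: "K \<ge> 1" "orlicz_const \<le> K" by (auto simp: K_def)
  have f: "f \<in> borel_measurable lebesgue" using assms by (simp add: orlicz_space_def)
  fix l :: real assume l: "l > 0" and modular: "(\<integral>\<^sup>+x. \<Phi> (cmod (f x) / l) \<partial>lebesgue) \<le> 1"
  obtain h where h: "h \<in> borel_measurable lebesgue" "AE x in lebesgue. T f x = h x"
    using T_AE_eq_measurable[OF f l] modular by (auto simp: le_less_trans)
  have "(\<integral>\<^sup>+x. \<Phi> (cmod (T f x) / (4 * K * l)) \<partial>lebesgue)
      = (\<integral>\<^sup>+x. \<Phi> (cmod (T f x) / (K * (4 * l))) \<partial>lebesgue)"
    by (simp add: mult.commute mult.left_commute)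
  also have "\<dots> \<le> ennreal (1 / K) * (\<integral>\<^sup>+x. \<Phi> (cmod (T f x) / (4 * l)) \<partial>lebesgue)"
    using h l K by (intro nn_integral_Phi_divide_le) auto
  also have "\<dots> \<le> ennreal (1 / K) * ennreal K"
    using modular_T_le[OF f l modular] K by (intro mult_left_mono) (auto intro: order_trans)
  also have "\<dots> = 1" using K by (simp add: ennreal_mult[symmetric])
  finally show "(\<integral>\<^sup>+x. \<Phi> (cmod (T f x) / (4 * max 1 orlicz_const * l)) \<partial>lebesgue) \<le> 1"
    by (simp add: K_def)
qed simp

definition weak_orlicz_const :: real where
  "weak_orlicz_const = C0 * (2 powr q0 / (1 - 2 powr (q0 - p))) + C1 * (D / (1 - D * 2 powr (- q1)))"

lemma weak_orlicz_const_nonneg: "weak_orlicz_const \<ge> 0"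
  using C0_nonneg C1_nonneg q0_less_p q1_large D_ge_1
  by (simp add: weak_orlicz_const_def powr_less_one less_imp_le)

lemma distrib_fun_T_le_split:
  assumes hi: "in_Lp q0 (high_part s f)" and lo: "in_Lp q1 (low_part s f)"
  shows "distrib_fun (T f) (2 * s) \<le> emeasure lebesgue {x. s < cmod (T (high_part s f) x)}
    + emeasure lebesgue {x. s < cmod (T (low_part s f) x)}"
proof -
  let ?A = "{x. s < cmod (T (high_part s f) x)}" and ?B = "{x. s < cmod (T (low_part s f) x)}"
  have sets: "?A \<in> sets lebesgue" "?B \<in> sets lebesgue"
    using T_measurable_q0[OF hi] T_measurable_q1[OF lo] by (auto intro: sets_lebesgue_norm_greater)
  have "distrib_fun (T f) (2 * s) \<le> emeasure lebesgue (?A \<union> ?B)"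
    unfolding distrib_fun_def
  proof (rule emeasure_mono_AE)
    show "AE x in lebesgue. x \<in> {x. cmod (T f x) > 2 * s} \<longrightarrow> x \<in> ?A \<union> ?B"
      using T_split_AE[OF hi lo]
    proof eventually_elim
      case (elim x)
      then have "cmod (T f x) \<le> cmod (T (high_part s f) x) + cmod (T (low_part s f) x)"
        by (simp add: norm_triangle_ineq)
      then show ?case by auto
    qed
  qed (use sets in auto)
  also have "\<dots> \<le> emeasure lebesgue ?A + emeasure lebesgue ?B"
    using sets by (intro emeasure_subadditive) auto
  finally show ?thesis .
qed

lemma distrib_fun_T_le:
  assumes f: "f \<in> borel_measurable lebesgue" and l: "l > 0"
    and weak: "\<And>t. t > 0 \<Longrightarrow> \<Phi> (t / l) * distrib_fun f t \<le> 1" and s: "s > 0"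
  shows "distrib_fun (T f) (2 * s) \<le> ennreal (weak_orlicz_const / \<phi> (s / l))"
proof -
  define hi where "hi = high_part s f"
  define lo where "lo = low_part s f"
  define B0 where "B0 = 2 powr q0 / \<phi> (s / l) / (1 - 2 powr (q0 - p))"
  define B1 where "B1 = D / \<phi> (s / l) / (1 - D * 2 powr (- q1))"
  have hi_bound: "(\<integral>\<^sup>+x. ennreal ((cmod (hi x) / s) powr q0) \<partial>lebesgue) \<le> ennreal B0"
    unfolding hi_def B0_def using f l weak s q0_gt_1 q0_less_p by (intro high_part_weak_bound) auto
  have lo_bound: "(\<integral>\<^sup>+x. ennreal ((cmod (lo x) / s) powr q1) \<partial>lebesgue) \<le> ennreal B1"
    unfolding lo_def B1_def using f l weak s q1_gt_1 q1_large by (intro low_part_weak_bound) auto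
  have hi_Lp: "in_Lp q0 hi"
    using hi_bound f s by (intro in_Lp_if_scaled_nn_integral_finite) (auto simp: hi_def le_less_trans)
  have lo_Lp: "in_Lp q1 lo"
    using lo_bound f s by (intro in_Lp_if_scaled_nn_integral_finite) (auto simp: lo_def le_less_trans)
  have "distrib_fun (T f) (2 * s)
      \<le> emeasure lebesgue {x. s < cmod (T hi x)} + emeasure lebesgue {x. s < cmod (T lo x)}"
    using hi_Lp lo_Lp unfolding hi_def lo_def by (rule distrib_fun_T_le_split)
  also have "\<dots> \<le> ennreal C0 * ennreal B0 + ennreal C1 * ennreal B1"
  proof (rule add_mono)
    have "emeasure lebesgue {x. s < cmod (T hi x)}
        \<le> ennreal C0 * (\<integral>\<^sup>+x. ennreal ((cmod (hi x) / s) powr q0) \<partial>lebesgue)"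
      using s q0_gt_1 by (intro Lp_bounded_emeasure_greater_le T_bounded_q0 hi_Lp C0_nonneg) auto
    then show "emeasure lebesgue {x. s < cmod (T hi x)} \<le> ennreal C0 * ennreal B0"
      using order_trans[OF _ mult_left_mono[OF hi_bound zero_le]] by blast
    have "emeasure lebesgue {x. s < cmod (T lo x)}
        \<le> ennreal C1 * (\<integral>\<^sup>+x. ennreal ((cmod (lo x) / s) powr q1) \<partial>lebesgue)"
      using s q1_gt_1 by (intro Lp_bounded_emeasure_greater_le T_bounded_q1 lo_Lp C1_nonneg) auto
    then show "emeasure lebesgue {x. s < cmod (T lo x)} \<le> ennreal C1 * ennreal B1"
      using order_trans[OF _ mult_left_mono[OF lo_bound zero_le]] by blast
  qed
  also have "\<dots> = ennreal (weak_orlicz_const / \<phi> (s / l))"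
  proof -
    have "\<phi> (s / l) > 0" using s l by (intro phi_pos) simp
    then have "B0 \<ge> 0" "B1 \<ge> 0" "C0 * B0 + C1 * B1 = weak_orlicz_const / \<phi> (s / l)"
      using q0_less_p q1_large D_ge_1
      by (auto simp: B0_def B1_def weak_orlicz_const_def powr_less_one less_imp_le add_divide_distrib mult.commute)
    then show ?thesis
      using C0_nonneg C1_nonneg by (simp add: ennreal_mult[symmetric] ennreal_plus[symmetric] del: ennreal_plus)
  qed
  finally show ?thesis .
qed

lemma weak_orlicz_norm_T_le:
  assumes "f \<in> weak_orlicz_space \<Phi>"
  shows "weak_orlicz_norm \<Phi> (T f) \<le> ennreal (2 * max 1 weak_orlicz_const) * weak_orlicz_norm \<Phi> f"
  unfolding weak_orlicz_norm_def
proof (rule Inf_ennreal_scale_le)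
  define K where "K = max 1 weak_orlicz_const"
  have K: "K \<ge> 1" "weak_orlicz_const \<le> K" by (auto simp: K_def)
  have f: "f \<in> borel_measurable lebesgue" using assms by (simp add: weak_orlicz_space_def)
  fix l :: real assume l: "l > 0" and weak: "\<forall>t>0. \<Phi> (t / l) * distrib_fun f t \<le> 1"
  show "\<forall>t>0. \<Phi> (t / (2 * max 1 weak_orlicz_const * l)) * distrib_fun (T f) t \<le> 1"
  proof (intro allI impI)
    fix t :: real assume "t > 0"
    define s where "s = t / 2"
    have s: "s > 0" and t: "t = 2 * s" using \<open>t > 0\<close> by (simp_all add: s_def)
    have pos: "\<phi> (s / l) > 0" using s l by (intro phi_pos) simp
    have "\<Phi> (t / (2 * K * l)) = \<Phi> (s / l / K)" by (simp add: t mult.commute mult.left_commute)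
    also have "\<dots> \<le> ennreal (1 / K) * \<Phi> (s / l)"
      using K s l by (intro Phi_divide_le) auto
    also have "\<dots> = ennreal (\<phi> (s / l) / K)"
      using s l K by (simp add: Phi_eq_phi phi_nonneg ennreal_mult[symmetric])
    finally have "\<Phi> (t / (2 * K * l)) * distrib_fun (T f) t
        \<le> ennreal (\<phi> (s / l) / K) * ennreal (weak_orlicz_const / \<phi> (s / l))"
      using distrib_fun_T_le[OF f l _ s] weak by (intro mult_mono) (auto simp: t)
    also have "\<dots> = ennreal (weak_orlicz_const / K)"
      using pos K weak_orlicz_const_nonneg by (simp add: ennreal_mult[symmetric])
    also have "\<dots> \<le> 1" using K by (simp add: ennreal_le_1)
    finally show "\<Phi> (t / (2 * max 1 weak_orlicz_const * l)) * distrib_fun (T f) t \<le> 1"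
      by (simp add: K_def)
  qed
qed simp

end

lemma strict_young_young_growth:
  assumes "strict_young \<Phi>"
  obtains p D where "young_growth \<Phi> p D"
proof -
  obtain p where "p > 1" and "\<And>t c. t \<ge> 0 \<Longrightarrow> 0 < c \<Longrightarrow> c \<le> 1 \<Longrightarrow> \<Phi> (c * t) \<le> ennreal (c powr p) * \<Phi> t"
    using assms unfolding strict_young_def lambda_cond_def by blast
  moreover obtain D where "D \<ge> 1" and "\<And>t. t \<ge> 0 \<Longrightarrow> \<Phi> (2 * t) \<le> ennreal D * \<Phi> t"
    using assms unfolding strict_young_def delta2_cond_def by blast
  ultimately have "young_growth \<Phi> p D"
    using assms by unfold_locales (auto simp: strict_young_def young_fun_def)
  then show thesis by (rule that)
qed

theorem mainTheorem3:
  fixes \<Phi> :: "real \<Rightarrow> ennreal"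
    and A :: "real^'n^'n"
    and a :: "(real^'n) \<times> (real^'n) \<Rightarrow> complex"
    and T :: "(real^'n \<Rightarrow> complex) \<Rightarrow> (real^'n \<Rightarrow> complex)"
  assumes "strict_young \<Phi>"
    and "invertible A"
    and "a \<in> symbol_S0"
    and "is_Op_extension A a T"
  shows "(\<exists>C::real. \<forall>f\<in>orlicz_space \<Phi>. orlicz_norm \<Phi> (T f) \<le> ennreal C * orlicz_norm \<Phi> f)
       \<and> (\<exists>C::real. \<forall>f\<in>weak_orlicz_space \<Phi>.
            weak_orlicz_norm \<Phi> (T f) \<le> ennreal C * weak_orlicz_norm \<Phi> f)"
proof -
  \<comment> \<open>\<open>invertible A\<close> and \<open>a \<in> symbol_S0\<close> enter only through \<open>is_Op_extension\<close>,
    which already provides the \<open>L\<^sup>q\<close> bounds.\<close>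
  obtain p D where "young_growth \<Phi> p D"
    using assms(1) by (rule strict_young_young_growth)
  then interpret young_growth \<Phi> p D .
  define q0 where "q0 = (1 + p) / 2"
  define q1 where "q1 = log 2 (4 * D)"
  have q0: "1 < q0" "q0 < p" using p_gt_1 by (auto simp: q0_def)
  have q1: "1 < q1" "D * 2 powr (- q1) < 1"
    using D_ge_1 by (auto simp: q1_def less_log_iff powr_minus)
  obtain C0 where "C0 \<ge> 0" "Lp_bounded q0 C0 T"
    using Op_extension_Lp_bounded[OF assms(4) q0(1)] .
  moreover obtain C1 where "C1 \<ge> 0" "Lp_bounded q1 C1 T"
    using Op_extension_Lp_bounded[OF assms(4) q1(1)] .
  ultimately interpret lp_interpolation \<Phi> p D T q0 q1 C0 C1
    using q0 q1 Op_extension_Lp_sum_additive[OF assms(4) q0(1) q1(1)] by unfold_locales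
  show ?thesis using orlicz_norm_T_le weak_orlicz_norm_T_le by blast
qed

end
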